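(* $\mathcal I\subsetneq\mathcal U$, where $\mathcal I$ is the set of processes $P$ such that $\Gamma;\Delta\vdash_{\mathcal I}P::x:A$ is derivable in $\pi\mathsf{ILL}$ for some $\Gamma,\Delta,x,A$, and $\mathcal U$ is the set of processes $P$ such that $\Gamma;\Delta\vdash P::\Lambda$ is derivable in $\pi\mathsf{ULL}$ for some $\Gamma,\Delta,\Lambda$. (For instance, $x(y).x(\,).y[\,].\mathbf 0\in\mathcal U\setminus\mathcal I$.)
   Context: **Types.** $A,B::=\mathbf 1\mid\bot\mid A\otimes B\mid A\multimap B\mid \oplus\{i:A_i\}_{i\in I}\mid \&\{i:A_i\}_{i\in I}\mid {!}A\mid {?}A$. **Duality**: $\mathbf 1^\perp=\bot$, $\bot^\perp=\mathbf 1$, $(A\otimes B)^\perp=A\multimap B^\perp$, $(A\multimap B)^\perp=A\otimes B^\perp$, $(\oplus\{i:A_i\})^\perp=\&\{i:A_i^\perp\}$, $(\&\{i:A_i\})^\perp=\oplus\{i:A_i^\perp\}$, $({!}A)^\perp={?}A^\perp$, $({?}A)^\perp={!}A^\perp$; $A⅋B:=A^\perp\multimap B$. **Processes.** $P,Q::=\mathbf 0\mid \nu x\,P\mid P|Q\mid x[y].P\mid x(y).P\mid x\triangleleft \ell.P\mid x\triangleright\{i:P_i\}_{i\in I}\mid {!}x(y).P\mid [x\leftrightarrow y]\mid x[\,].P\mid x(\,).P$ (send, receive, select, branch, replicated receive, forwarder, empty send, empty receive). $y$ is bound in $\nu y\,P$, $x(y).P$, ${!}x(y).P$; processes up to $\alpha$-renaming;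 $P\{y/x\}$ capture-avoiding substitution. **Type system $\pi\mathsf{ULL}$.** Judgments $\Gamma;\Delta\vdash P::\Lambda$ ($\Gamma$ unrestricted, $\Delta,\Lambda$ linear; finite sets of $x:A$ with distinct names; comma = disjoint union). Rules ($\Gamma$ shared): (idR) $\Gamma;x:A\vdash[x\leftrightarrow y]::y:A$. (idL) $\Gamma;x:A,y:A^\perp\vdash[x\leftrightarrow y]::\emptyset$. (1R) $\Gamma;\emptyset\vdash x[\,].\mathbf 0::x:\mathbf 1$. (1L) $\Gamma;\Delta\vdash P::\Lambda\Rightarrow\Gamma;\Delta,x:\mathbf 1\vdash x(\,).P::\Lambda$. (⊥R) $\Gamma;\Delta\vdash P::\Lambda\Rightarrow\Gamma;\Delta\vdash x(\,).P::\Lambda,x:\bot$. (⊥L) $\Gamma;x:\bot\vdash x[\,].\mathbf 0::\emptyset$. (⊗R) $\Gamma;\Delta\vdash P::\Lambda,y:A$, $\Gamma;\Delta'\vdash Q::\Lambda',x:B\Rightarrow\Gamma;\Delta,\Delta'\vdash\nu y\,x[y].(P|Q)::\Lambda,\Lambda',x:A\otimes B$. (⊗L) $\Gamma;\Delta,y:A,x:B\vdash P::\Lambda\Rightarrow\Gamma;\Delta,x:A\otimes B\vdash x(y).P::\Lambda$. (⅋R) $\Gamma;\Delta\vdash P::\Lambda,y:A,x:B\Rightarrow\Gamma;\Delta\vdash x(y).P::\Lambda,x:A⅋B$. (⅋L) $\Gamma;\Delta,y:A\vdash P::\Lambda$, $\Gamma;\Delta',x:B\vdash Q::\Lambda'\Rightarrow\Gamma;\Delta,\Delta',x:A⅋B\vdash\nu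 y\,x[y].(P|Q)::\Lambda,\Lambda'$. (⊸R) $\Gamma;\Delta,y:A\vdash P::\Lambda,x:B\Rightarrow\Gamma;\Delta\vdash x(y).P::\Lambda,x:A\multimap B$. (⊸L) $\Gamma;\Delta\vdash P::\Lambda,y:A$, $\Gamma;\Delta',x:B\vdash Q::\Lambda'\Rightarrow\Gamma;\Delta,\Delta',x:A\multimap B\vdash\nu y\,x[y].(P|Q)::\Lambda,\Lambda'$. (⊕R) $\Gamma;\Delta\vdash P::\Lambda,x:A_j$, $j\in I\Rightarrow\Gamma;\Delta\vdash x\triangleleft j.P::\Lambda,x:\oplus\{i:A_i\}_{i\in I}$. (⊕L) $\forall i\in I.\ \Gamma;\Delta,x:A_i\vdash P_i::\Lambda\Rightarrow\Gamma;\Delta,x:\oplus\{i:A_i\}_{i\in I}\vdash x\triangleright\{i:P_i\}_{i\in I}::\Lambda$. (&R) $\forall i\in I.\ \Gamma;\Delta\vdash P_i::\Lambda,x:A_i\Rightarrow\Gamma;\Delta\vdash x\triangleright\{i:P_i\}_{i\in I}::\Lambda,x:\&\{i:A_i\}_{i\in I}$. (&L) $\Gamma;\Delta,x:A_j\vdash P::\Lambda$, $j\in I\Rightarrow\Gamma;\Delta,x:\&\{i:A_i\}_{i\in I}\vdash x\triangleleft j.P::\Lambda$. (copyR) $\Gamma,u:A;\Delta\vdash P::\Lambda,x:A^\perp\Rightarrow\Gamma,u:A;\Delta\vdash\nu x\,u[x].P::\Lambda$. (copyL) $\Gamma,u:A;\Delta,x:A\vdash P::\Lambda\Rightarrow\Gamma,u:A;\Delta\vdash\nu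 x\,u[x].P::\Lambda$. (!R) $\Gamma;\emptyset\vdash P::y:A\Rightarrow\Gamma;\emptyset\vdash{!}x(y).P::x:{!}A$. (!L) $\Gamma,u:A;\Delta\vdash P::\Lambda\Rightarrow\Gamma;\Delta,x:{!}A\vdash P\{x/u\}::\Lambda$. (?R) $\Gamma,u:A;\Delta\vdash P::\Lambda\Rightarrow\Gamma;\Delta\vdash P\{x/u\}::\Lambda,x:{?}A^\perp$. (?L) $\Gamma;y:A\vdash P::\emptyset\Rightarrow\Gamma;x:{?}A\vdash{!}x(y).P::\emptyset$. (cutRL) $\Gamma;\Delta\vdash P::\Lambda,x:A$, $\Gamma;\Delta',x:A\vdash Q::\Lambda'\Rightarrow\Gamma;\Delta,\Delta'\vdash\nu x(P|Q)::\Lambda,\Lambda'$; (cutLR) premises $\Gamma;\Delta,x:A\vdash P::\Lambda$, $\Gamma;\Delta'\vdash Q::\Lambda',x:A$; (cutRR) premises $\Gamma;\Delta\vdash P::\Lambda,x:A$, $\Gamma;\Delta'\vdash Q::\Lambda',x:A^\perp$; (cutLL) premises $\Gamma;\Delta,x:A\vdash P::\Lambda$, $\Gamma;\Delta',x:A^\perp\vdash Q::\Lambda'$ (same conclusion). (cut!R) $\Gamma,u:A;\Delta\vdash P::\Lambda$, $\Gamma;\emptyset\vdash Q::x:A\Rightarrow\Gamma;\Delta\vdash\nu u(P|{!}u(x).Q)::\Lambda$. (cut!L) $\Gamma;\emptyset\vdash P::x:A$, $\Gamma,u:A;\Delta\vdash Q::\Lambda\Rightarrow\Gamma;\Delta\vdash\nu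 u({!}u(x).P|Q)::\Lambda$. (cut?R) $\Gamma,u:A;\Delta\vdash P::\Lambda$, $\Gamma;x:A^\perp\vdash Q::\emptyset\Rightarrow\Gamma;\Delta\vdash\nu u(P|{!}u(x).Q)::\Lambda$. (cut?L) $\Gamma;x:A^\perp\vdash P::\emptyset$, $\Gamma,u:A;\Delta\vdash Q::\Lambda\Rightarrow\Gamma;\Delta\vdash\nu u({!}u(x).P|Q)::\Lambda$. **$\pi\mathsf{ILL}$**: types $A,B::=\mathbf 1\mid A\otimes B\mid A\multimap B\mid\oplus\{i:A_i\}_{i\in I}\mid\&\{i:A_i\}_{i\in I}\mid{!}A$ (no $\bot$, no ${?}$); judgments $\Gamma;\Delta\vdash_{\mathcal I}P::z:C$ (exactly one assignment on the right). Rules: (id) $\Gamma;x:A\vdash_{\mathcal I}[x\leftrightarrow y]::y:A$. (1R) $\Gamma;\emptyset\vdash_{\mathcal I}x[\,].\mathbf 0::x:\mathbf 1$. (1L) $\Gamma;\Delta\vdash_{\mathcal I}P::z:C\Rightarrow\Gamma;\Delta,x:\mathbf 1\vdash_{\mathcal I}x(\,).P::z:C$. (⊗R) $\Gamma;\Delta\vdash_{\mathcal I}P::y:A$, $\Gamma;\Delta'\vdash_{\mathcal I}Q::x:B\Rightarrow\Gamma;\Delta,\Delta'\vdash_{\mathcal I}\nu y\,x[y].(P|Q)::x:A\otimes B$. (⊗L) $\Gamma;\Delta,y:A,x:B\vdash_{\mathcal I}P::z:C\Rightarrow\Gamma;\Delta,x:A\otimes B\vdash_{\mathcal I}x(y).P::z:C$.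 (⊸R) $\Gamma;\Delta,y:A\vdash_{\mathcal I}P::x:B\Rightarrow\Gamma;\Delta\vdash_{\mathcal I}x(y).P::x:A\multimap B$. (⊸L) $\Gamma;\Delta\vdash_{\mathcal I}P::y:A$, $\Gamma;\Delta',x:B\vdash_{\mathcal I}Q::z:C\Rightarrow\Gamma;\Delta,\Delta',x:A\multimap B\vdash_{\mathcal I}\nu y\,x[y].(P|Q)::z:C$. (⊕R) $\Gamma;\Delta\vdash_{\mathcal I}P::x:A_j$, $j\in I\Rightarrow\Gamma;\Delta\vdash_{\mathcal I}x\triangleleft j.P::x:\oplus\{i:A_i\}_{i\in I}$. (⊕L) $\forall i.\ \Gamma;\Delta,x:A_i\vdash_{\mathcal I}P_i::z:C\Rightarrow\Gamma;\Delta,x:\oplus\{i:A_i\}_{i\in I}\vdash_{\mathcal I}x\triangleright\{i:P_i\}_{i\in I}::z:C$. (&R) $\forall i.\ \Gamma;\Delta\vdash_{\mathcal I}P_i::x:A_i\Rightarrow\Gamma;\Delta\vdash_{\mathcal I}x\triangleright\{i:P_i\}_{i\in I}::x:\&\{i:A_i\}_{i\in I}$. (&L) $\Gamma;\Delta,x:A_j\vdash_{\mathcal I}P::z:C$, $j\in I\Rightarrow\Gamma;\Delta,x:\&\{i:A_i\}_{i\in I}\vdash_{\mathcal I}x\triangleleft j.P::z:C$. (copy) $\Gamma,u:A;\Delta,x:A\vdash_{\mathcal I}P::z:C\Rightarrow\Gamma,u:A;\Delta\vdash_{\mathcal I}\nu x\,u[x].P::z:C$. (!R) $\Gamma;\emptyset\vdash_{\mathcal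 I}P::y:A\Rightarrow\Gamma;\emptyset\vdash_{\mathcal I}{!}x(y).P::x:{!}A$. (!L) $\Gamma,u:A;\Delta\vdash_{\mathcal I}P::z:C\Rightarrow\Gamma;\Delta,x:{!}A\vdash_{\mathcal I}P\{x/u\}::z:C$. (cutRL) $\Gamma;\Delta\vdash_{\mathcal I}P::x:A$, $\Gamma;\Delta',x:A\vdash_{\mathcal I}Q::z:C\Rightarrow\Gamma;\Delta,\Delta'\vdash_{\mathcal I}\nu x(P|Q)::z:C$. (cutLR) $\Gamma;\Delta,x:A\vdash_{\mathcal I}P::z:C$, $\Gamma;\Delta'\vdash_{\mathcal I}Q::x:A\Rightarrow\Gamma;\Delta,\Delta'\vdash_{\mathcal I}\nu x(P|Q)::z:C$. (cut!R) $\Gamma,u:A;\Delta\vdash_{\mathcal I}P::z:C$, $\Gamma;\emptyset\vdash_{\mathcal I}Q::x:A\Rightarrow\Gamma;\Delta\vdash_{\mathcal I}\nu u(P|{!}u(x).Q)::z:C$. (cut!L) $\Gamma;\emptyset\vdash_{\mathcal I}P::x:A$, $\Gamma,u:A;\Delta\vdash_{\mathcal I}Q::z:C\Rightarrow\Gamma;\Delta\vdash_{\mathcal I}\nu u({!}u(x).P|Q)::z:C$. *)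

theory Defs
  imports Main "HOL-Library.Finite_Map"
begin

type_synonym name = nat
type_synonym label = nat

datatype tp =
    One
  | Bot
  | Tensor tp tp
  | Lolli tp tp
  | Plus "(label, tp) fmap"     (* \<oplus>{i:A_i}_{i\<in>I}, I = fmdom *)
  | With "(label, tp) fmap"
  | Bang tp
  | Quest tp

primrec dual :: "tp \<Rightarrow> tp" where
  "dual One = Bot"
| "dual Bot = One"
| "dual (Tensor A B) = Lolli A (dual B)"
| "dual (Lolli A B) = Tensor A (dual B)"
| "dual (Plus As) = With (fmmap dual As)"
| "dual (With As) = Plus (fmmap dual As)"
| "dual (Bang A) = Quest (dual A)"
| "dual (Quest A) = Bang (dual A)"

definition ParT :: "tp \<Rightarrow> tp \<Rightarrow> tp" where
  "ParT A B = Lolli (dual A) B"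

primrec ityp :: "tp \<Rightarrow> bool" where
  "ityp One = True"
| "ityp Bot = False"
| "ityp (Tensor A B) = (ityp A \<and> ityp B)"
| "ityp (Lolli A B) = (ityp A \<and> ityp B)"
| "ityp (Plus As) = pred_fmap ityp As"
| "ityp (With As) = pred_fmap ityp As"
| "ityp (Bang A) = ityp A"
| "ityp (Quest A) = False"

datatype proc =
    Nil
  | Nu name proc                        (* \<nu>x P        binds x *)
  | Par proc proc
  | Out name name proc                  (* x[y].P *)
  | In name name proc                   (* x(y).P       binds y *)
  | Sel name label proc
  | Case name "(label, proc) fmap"
  | RepIn name name proc                (* !x(y).P      binds y *)
  | Fwd name name
  | Close name proc
  | Wait name proc

primrec fv :: "proc \<Rightarrow> name set" where
  "fv Nil = {}"
| "fv (Nu x P) = fv P - {x}"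
| "fv (Par P Q) = fv P \<union> fv Q"
| "fv (Out x y P) = {x, y} \<union> fv P"
| "fv (In x y P) = {x} \<union> (fv P - {y})"
| "fv (Sel x l P) = {x} \<union> fv P"
| "fv (Case x Ps) = {x} \<union> \<Union> (fmran' (fmmap fv Ps))"
| "fv (RepIn x y P) = {x} \<union> (fv P - {y})"
| "fv (Fwd x y) = {x, y}"
| "fv (Close x P) = {x} \<union> fv P"
| "fv (Wait x P) = {x} \<union> fv P"

primrec bn :: "proc \<Rightarrow> name set" where
  "bn Nil = {}"
| "bn (Nu x P) = {x} \<union> bn P"
| "bn (Par P Q) = bn P \<union> bn Q"
| "bn (Out x y P) = bn P"
| "bn (In x y P) = {y} \<union> bn P"
| "bn (Sel x l P) = bn P"
| "bn (Case x Ps) = \<Union> (fmran' (fmmap bn Ps))"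
| "bn (RepIn x y P) = {y} \<union> bn P"
| "bn (Fwd x y) = {}"
| "bn (Close x P) = bn P"
| "bn (Wait x P) = bn P"

definition swp :: "name \<Rightarrow> name \<Rightarrow> name \<Rightarrow> name" where
  "swp a b c = (if c = a then b else if c = b then a else c)"

primrec swap :: "name \<Rightarrow> name \<Rightarrow> proc \<Rightarrow> proc" where
  "swap a b Nil = Nil"
| "swap a b (Nu x P) = Nu (swp a b x) (swap a b P)"
| "swap a b (Par P Q) = Par (swap a b P) (swap a b Q)"
| "swap a b (Out x y P) = Out (swp a b x) (swp a b y) (swap a b P)"
| "swap a b (In x y P) = In (swp a b x) (swp a b y) (swap a b P)"
| "swap a b (Sel x l P) = Sel (swp a b x) l (swap a b P)"
| "swap a b (Case x Ps) = Case (swp a b x) (fmmap (swap a b) Ps)"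
| "swap a b (RepIn x y P) = RepIn (swp a b x) (swp a b y) (swap a b P)"
| "swap a b (Fwd x y) = Fwd (swp a b x) (swp a b y)"
| "swap a b (Close x P) = Close (swp a b x) (swap a b P)"
| "swap a b (Wait x P) = Wait (swp a b x) (swap a b P)"

inductive alpha :: "proc \<Rightarrow> proc \<Rightarrow> bool" where
  a_refl: "alpha P P"
| a_sym: "alpha P Q \<Longrightarrow> alpha Q P"
| a_trans: "alpha P Q \<Longrightarrow> alpha Q R \<Longrightarrow> alpha P R"
| a_Nu_ren: "z \<notin> fv (Nu x P) \<Longrightarrow> alpha (Nu x P) (Nu z (swap x z P))"
| a_In_ren: "z \<notin> fv (In x y P) \<Longrightarrow> alpha (In x y P) (In x z (swap y z P))"
| a_RepIn_ren: "z \<notin> fv (RepIn x y P) \<Longrightarrow> alpha (RepIn x y P) (RepIn x z (swap y z P))"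
| a_Nu: "alpha P Q \<Longrightarrow> alpha (Nu x P) (Nu x Q)"
| a_Par: "alpha P P' \<Longrightarrow> alpha Q Q' \<Longrightarrow> alpha (Par P Q) (Par P' Q')"
| a_Out: "alpha P Q \<Longrightarrow> alpha (Out x y P) (Out x y Q)"
| a_In: "alpha P Q \<Longrightarrow> alpha (In x y P) (In x y Q)"
| a_Sel: "alpha P Q \<Longrightarrow> alpha (Sel x l P) (Sel x l Q)"
| a_Case: "fmdom Ps = fmdom Qs \<Longrightarrow>
    (\<forall>i P Q. fmlookup Ps i = Some P \<longrightarrow> fmlookup Qs i = Some Q \<longrightarrow> alpha P Q) \<Longrightarrow>
    alpha (Case x Ps) (Case x Qs)"
| a_RepIn: "alpha P Q \<Longrightarrow> alpha (RepIn x y P) (RepIn x y Q)"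
| a_Close: "alpha P Q \<Longrightarrow> alpha (Close x P) (Close x Q)"
| a_Wait: "alpha P Q \<Longrightarrow> alpha (Wait x P) (Wait x Q)"

(* replacement of free occurrences of u by x; it is capture-avoiding (and hence
   coincides with P{x/u}) whenever x \<notin> bn P, which the typing rules require;
   together with the alpha rule this models capture-avoiding substitution
   on processes up to alpha-renaming *)
definition rn :: "name \<Rightarrow> name \<Rightarrow> name \<Rightarrow> name" where
  "rn x u c = (if c = u then x else c)"

primrec subst :: "name \<Rightarrow> name \<Rightarrow> proc \<Rightarrow> proc" where
  "subst x u Nil = Nil"
| "subst x u (Nu y P) = Nu y (if y = u then P else subst x u P)"
| "subst x u (Par P Q) = Par (subst x u P) (subst x u Q)"
| "subst x u (Out a b P) = Out (rn x u a) (rn x u b) (subst x u P)"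
| "subst x u (In a y P) = In (rn x u a) y (if y = u then P else subst x u P)"
| "subst x u (Sel a l P) = Sel (rn x u a) l (subst x u P)"
| "subst x u (Case a Ps) = Case (rn x u a) (fmmap (subst x u) Ps)"
| "subst x u (RepIn a y P) = RepIn (rn x u a) y (if y = u then P else subst x u P)"
| "subst x u (Fwd a b) = Fwd (rn x u a) (rn x u b)"
| "subst x u (Close a P) = Close (rn x u a) (subst x u P)"
| "subst x u (Wait a P) = Wait (rn x u a) (subst x u P)"

type_synonym ctx = "(name, tp) fmap"

definition sing :: "name \<Rightarrow> tp \<Rightarrow> ctx" where
  "sing x A = fmupd x A fmempty"

definition disj :: "ctx \<Rightarrow> ctx \<Rightarrow> bool" where
  "disj D E \<longleftrightarrow> fmdom D |\<inter>| fmdom E = {||}"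

definition ok :: "ctx \<Rightarrow> ctx \<Rightarrow> ctx \<Rightarrow> bool" where
  "ok G D L \<longleftrightarrow> disj G D \<and> disj G L \<and> disj D L"

(* ---------- piULL:  ull G D P L  means  G ; D |- P :: L ---------- *)
inductive ull :: "ctx \<Rightarrow> ctx \<Rightarrow> proc \<Rightarrow> ctx \<Rightarrow> bool" where
  idR: "ok G (sing x A) (sing y A) \<Longrightarrow> ull G (sing x A) (Fwd x y) (sing y A)"
| idL: "x \<noteq> y \<Longrightarrow> ok G (fmupd x A (sing y (dual A))) fmempty \<Longrightarrow>
    ull G (fmupd x A (sing y (dual A))) (Fwd x y) fmempty"
| oneR: "ok G fmempty (sing x One) \<Longrightarrow> ull G fmempty (Close x Nil) (sing x One)"
| oneL: "ull G D P L \<Longrightarrow> x |\<notin>| fmdom D \<Longrightarrow> ok G (fmupd x One D) L \<Longrightarrow>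
    ull G (fmupd x One D) (Wait x P) L"
| botR: "ull G D P L \<Longrightarrow> x |\<notin>| fmdom L \<Longrightarrow> ok G D (fmupd x Bot L) \<Longrightarrow>
    ull G D (Wait x P) (fmupd x Bot L)"
| botL: "ok G (sing x Bot) fmempty \<Longrightarrow> ull G (sing x Bot) (Close x Nil) fmempty"
| tensorR: "ull G D P (fmupd y A L) \<Longrightarrow> y |\<notin>| fmdom L \<Longrightarrow>
    ull G D' Q (fmupd x B L') \<Longrightarrow> x |\<notin>| fmdom L' \<Longrightarrow>
    disj D D' \<Longrightarrow> disj L L' \<Longrightarrow> x |\<notin>| fmdom (L ++\<^sub>f L') \<Longrightarrow>
    ok G (D ++\<^sub>f D') (fmupd x (Tensor A B) (L ++\<^sub>f L')) \<Longrightarrow>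
    ull G (D ++\<^sub>f D') (Nu y (Out x y (Par P Q))) (fmupd x (Tensor A B) (L ++\<^sub>f L'))"
| tensorL: "ull G (fmupd x B (fmupd y A D)) P L \<Longrightarrow> y |\<notin>| fmdom D \<Longrightarrow>
    x |\<notin>| fmdom D \<Longrightarrow> x \<noteq> y \<Longrightarrow> ok G (fmupd x (Tensor A B) D) L \<Longrightarrow>
    ull G (fmupd x (Tensor A B) D) (In x y P) L"
| parR: "ull G D P (fmupd x B (fmupd y A L)) \<Longrightarrow> y |\<notin>| fmdom L \<Longrightarrow>
    x |\<notin>| fmdom L \<Longrightarrow> x \<noteq> y \<Longrightarrow> ok G D (fmupd x (ParT A B) L) \<Longrightarrow>
    ull G D (In x y P) (fmupd x (ParT A B) L)"
| parL: "ull G (fmupd y A D) P L \<Longrightarrow> y |\<notin>| fmdom D \<Longrightarrow>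
    ull G (fmupd x B D') Q L' \<Longrightarrow> x |\<notin>| fmdom D' \<Longrightarrow>
    disj D D' \<Longrightarrow> disj L L' \<Longrightarrow> x |\<notin>| fmdom (D ++\<^sub>f D') \<Longrightarrow>
    ok G (fmupd x (ParT A B) (D ++\<^sub>f D')) (L ++\<^sub>f L') \<Longrightarrow>
    ull G (fmupd x (ParT A B) (D ++\<^sub>f D')) (Nu y (Out x y (Par P Q))) (L ++\<^sub>f L')"
| lolliR: "ull G (fmupd y A D) P (fmupd x B L) \<Longrightarrow> y |\<notin>| fmdom D \<Longrightarrow>
    x |\<notin>| fmdom L \<Longrightarrow> ok G D (fmupd x (Lolli A B) L) \<Longrightarrow>
    ull G D (In x y P) (fmupd x (Lolli A B) L)"
| lolliL: "ull G D P (fmupd y A L) \<Longrightarrow> y |\<notin>| fmdom L \<Longrightarrow>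
    ull G (fmupd x B D') Q L' \<Longrightarrow> x |\<notin>| fmdom D' \<Longrightarrow>
    disj D D' \<Longrightarrow> disj L L' \<Longrightarrow> x |\<notin>| fmdom (D ++\<^sub>f D') \<Longrightarrow>
    ok G (fmupd x (Lolli A B) (D ++\<^sub>f D')) (L ++\<^sub>f L') \<Longrightarrow>
    ull G (fmupd x (Lolli A B) (D ++\<^sub>f D')) (Nu y (Out x y (Par P Q))) (L ++\<^sub>f L')"
| plusR: "fmlookup As j = Some A \<Longrightarrow> ull G D P (fmupd x A L) \<Longrightarrow> x |\<notin>| fmdom L \<Longrightarrow>
    ok G D (fmupd x (Plus As) L) \<Longrightarrow> ull G D (Sel x j P) (fmupd x (Plus As) L)"
| plusL: "fmdom Ps = fmdom As \<Longrightarrow>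
    (\<forall>i A P. fmlookup As i = Some A \<longrightarrow> fmlookup Ps i = Some P \<longrightarrow> ull G (fmupd x A D) P L) \<Longrightarrow>
    x |\<notin>| fmdom D \<Longrightarrow> ok G (fmupd x (Plus As) D) L \<Longrightarrow>
    ull G (fmupd x (Plus As) D) (Case x Ps) L"
| withR: "fmdom Ps = fmdom As \<Longrightarrow>
    (\<forall>i A P. fmlookup As i = Some A \<longrightarrow> fmlookup Ps i = Some P \<longrightarrow> ull G D P (fmupd x A L)) \<Longrightarrow>
    x |\<notin>| fmdom L \<Longrightarrow> ok G D (fmupd x (With As) L) \<Longrightarrow>
    ull G D (Case x Ps) (fmupd x (With As) L)"
| withL: "fmlookup As j = Some A \<Longrightarrow> ull G (fmupd x A D) P L \<Longrightarrow> x |\<notin>| fmdom D \<Longrightarrow>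
    ok G (fmupd x (With As) D) L \<Longrightarrow> ull G (fmupd x (With As) D) (Sel x j P) L"
| copyR: "fmlookup G u = Some A \<Longrightarrow> ull G D P (fmupd x (dual A) L) \<Longrightarrow> x |\<notin>| fmdom L \<Longrightarrow>
    ok G D L \<Longrightarrow> ull G D (Nu x (Out u x P)) L"
| copyL: "fmlookup G u = Some A \<Longrightarrow> ull G (fmupd x A D) P L \<Longrightarrow> x |\<notin>| fmdom D \<Longrightarrow>
    ok G D L \<Longrightarrow> ull G D (Nu x (Out u x P)) L"
| bangR: "ull G fmempty P (sing y A) \<Longrightarrow> ok G fmempty (sing x (Bang A)) \<Longrightarrow>
    ull G fmempty (RepIn x y P) (sing x (Bang A))"
| bangL: "ull (fmupd u A G) D P L \<Longrightarrow> u |\<notin>| fmdom G \<Longrightarrow> x |\<notin>| fmdom D \<Longrightarrow>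
    x \<notin> bn P \<Longrightarrow> ok G (fmupd x (Bang A) D) L \<Longrightarrow>
    ull G (fmupd x (Bang A) D) (subst x u P) L"
| questR: "ull (fmupd u A G) D P L \<Longrightarrow> u |\<notin>| fmdom G \<Longrightarrow> x |\<notin>| fmdom L \<Longrightarrow>
    x \<notin> bn P \<Longrightarrow> ok G D (fmupd x (Quest (dual A)) L) \<Longrightarrow>
    ull G D (subst x u P) (fmupd x (Quest (dual A)) L)"
| questL: "ull G (sing y A) P fmempty \<Longrightarrow> ok G (sing x (Quest A)) fmempty \<Longrightarrow>
    ull G (sing x (Quest A)) (RepIn x y P) fmempty"
| cutRL: "ull G D P (fmupd x A L) \<Longrightarrow> x |\<notin>| fmdom L \<Longrightarrow>
    ull G (fmupd x A D') Q L' \<Longrightarrow> x |\<notin>| fmdom D' \<Longrightarrow>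
    disj D D' \<Longrightarrow> disj L L' \<Longrightarrow> ok G (D ++\<^sub>f D') (L ++\<^sub>f L') \<Longrightarrow>
    ull G (D ++\<^sub>f D') (Nu x (Par P Q)) (L ++\<^sub>f L')"
| cutLR: "ull G (fmupd x A D) P L \<Longrightarrow> x |\<notin>| fmdom D \<Longrightarrow>
    ull G D' Q (fmupd x A L') \<Longrightarrow> x |\<notin>| fmdom L' \<Longrightarrow>
    disj D D' \<Longrightarrow> disj L L' \<Longrightarrow> ok G (D ++\<^sub>f D') (L ++\<^sub>f L') \<Longrightarrow>
    ull G (D ++\<^sub>f D') (Nu x (Par P Q)) (L ++\<^sub>f L')"
| cutRR: "ull G D P (fmupd x A L) \<Longrightarrow> x |\<notin>| fmdom L \<Longrightarrow>
    ull G D' Q (fmupd x (dual A) L') \<Longrightarrow> x |\<notin>| fmdom L' \<Longrightarrow>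
    disj D D' \<Longrightarrow> disj L L' \<Longrightarrow> ok G (D ++\<^sub>f D') (L ++\<^sub>f L') \<Longrightarrow>
    ull G (D ++\<^sub>f D') (Nu x (Par P Q)) (L ++\<^sub>f L')"
| cutLL: "ull G (fmupd x A D) P L \<Longrightarrow> x |\<notin>| fmdom D \<Longrightarrow>
    ull G (fmupd x (dual A) D') Q L' \<Longrightarrow> x |\<notin>| fmdom D' \<Longrightarrow>
    disj D D' \<Longrightarrow> disj L L' \<Longrightarrow> ok G (D ++\<^sub>f D') (L ++\<^sub>f L') \<Longrightarrow>
    ull G (D ++\<^sub>f D') (Nu x (Par P Q)) (L ++\<^sub>f L')"
| cutBangR: "ull (fmupd u A G) D P L \<Longrightarrow> u |\<notin>| fmdom G \<Longrightarrow>
    ull G fmempty Q (sing x A) \<Longrightarrow> ok G D L \<Longrightarrow>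
    ull G D (Nu u (Par P (RepIn u x Q))) L"
| cutBangL: "ull G fmempty P (sing x A) \<Longrightarrow>
    ull (fmupd u A G) D Q L \<Longrightarrow> u |\<notin>| fmdom G \<Longrightarrow> ok G D L \<Longrightarrow>
    ull G D (Nu u (Par (RepIn u x P) Q)) L"
| cutQuestR: "ull (fmupd u A G) D P L \<Longrightarrow> u |\<notin>| fmdom G \<Longrightarrow>
    ull G (sing x (dual A)) Q fmempty \<Longrightarrow> ok G D L \<Longrightarrow>
    ull G D (Nu u (Par P (RepIn u x Q))) L"
| cutQuestL: "ull G (sing x (dual A)) P fmempty \<Longrightarrow>
    ull (fmupd u A G) D Q L \<Longrightarrow> u |\<notin>| fmdom G \<Longrightarrow> ok G D L \<Longrightarrow>
    ull G D (Nu u (Par (RepIn u x P) Q)) L"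
| alphaU: "ull G D P L \<Longrightarrow> alpha P Q \<Longrightarrow> ull G D Q L"

definition ictx :: "ctx \<Rightarrow> bool" where
  "ictx D \<longleftrightarrow> (\<forall>A\<in>fmran' D. ityp A)"

definition iok :: "ctx \<Rightarrow> ctx \<Rightarrow> name \<Rightarrow> tp \<Rightarrow> bool" where
  "iok G D z C \<longleftrightarrow> ok G D (sing z C) \<and> ictx G \<and> ictx D \<and> ityp C"

(* ---------- piILL:  ill G D P z C  means  G ; D |-_I P :: z:C ---------- *)
inductive ill :: "ctx \<Rightarrow> ctx \<Rightarrow> proc \<Rightarrow> name \<Rightarrow> tp \<Rightarrow> bool" where
  iid: "ityp A \<Longrightarrow> iok G (sing x A) y A \<Longrightarrow> ill G (sing x A) (Fwd x y) y A"
| ioneR: "iok G fmempty x One \<Longrightarrow> ill G fmempty (Close x Nil) x One"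
| ioneL: "ill G D P z C \<Longrightarrow> x |\<notin>| fmdom D \<Longrightarrow> iok G (fmupd x One D) z C \<Longrightarrow>
    ill G (fmupd x One D) (Wait x P) z C"
| itensorR: "ill G D P y A \<Longrightarrow> ill G D' Q x B \<Longrightarrow> disj D D' \<Longrightarrow>
    iok G (D ++\<^sub>f D') x (Tensor A B) \<Longrightarrow>
    ill G (D ++\<^sub>f D') (Nu y (Out x y (Par P Q))) x (Tensor A B)"
| itensorL: "ill G (fmupd x B (fmupd y A D)) P z C \<Longrightarrow> y |\<notin>| fmdom D \<Longrightarrow>
    x |\<notin>| fmdom D \<Longrightarrow> x \<noteq> y \<Longrightarrow> iok G (fmupd x (Tensor A B) D) z C \<Longrightarrow>
    ill G (fmupd x (Tensor A B) D) (In x y P) z C"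
| ilolliR: "ill G (fmupd y A D) P x B \<Longrightarrow> y |\<notin>| fmdom D \<Longrightarrow>
    iok G D x (Lolli A B) \<Longrightarrow> ill G D (In x y P) x (Lolli A B)"
| ilolliL: "ill G D P y A \<Longrightarrow> ill G (fmupd x B D') Q z C \<Longrightarrow> x |\<notin>| fmdom D' \<Longrightarrow>
    disj D D' \<Longrightarrow> x |\<notin>| fmdom (D ++\<^sub>f D') \<Longrightarrow>
    iok G (fmupd x (Lolli A B) (D ++\<^sub>f D')) z C \<Longrightarrow>
    ill G (fmupd x (Lolli A B) (D ++\<^sub>f D')) (Nu y (Out x y (Par P Q))) z C"
| iplusR: "fmlookup As j = Some A \<Longrightarrow> ill G D P x A \<Longrightarrow> ityp (Plus As) \<Longrightarrow>
    iok G D x (Plus As) \<Longrightarrow> ill G D (Sel x j P) x (Plus As)"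
| iplusL: "fmdom Ps = fmdom As \<Longrightarrow>
    (\<forall>i A P. fmlookup As i = Some A \<longrightarrow> fmlookup Ps i = Some P \<longrightarrow> ill G (fmupd x A D) P z C) \<Longrightarrow>
    x |\<notin>| fmdom D \<Longrightarrow> ityp (Plus As) \<Longrightarrow> iok G (fmupd x (Plus As) D) z C \<Longrightarrow>
    ill G (fmupd x (Plus As) D) (Case x Ps) z C"
| iwithR: "fmdom Ps = fmdom As \<Longrightarrow>
    (\<forall>i A P. fmlookup As i = Some A \<longrightarrow> fmlookup Ps i = Some P \<longrightarrow> ill G D P x A) \<Longrightarrow>
    ityp (With As) \<Longrightarrow> iok G D x (With As) \<Longrightarrow>
    ill G D (Case x Ps) x (With As)"
| iwithL: "fmlookup As j = Some A \<Longrightarrow> ill G (fmupd x A D) P z C \<Longrightarrow> x |\<notin>| fmdom D \<Longrightarrow>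
    ityp (With As) \<Longrightarrow> iok G (fmupd x (With As) D) z C \<Longrightarrow>
    ill G (fmupd x (With As) D) (Sel x j P) z C"
| icopy: "fmlookup G u = Some A \<Longrightarrow> ill G (fmupd x A D) P z C \<Longrightarrow> x |\<notin>| fmdom D \<Longrightarrow>
    iok G D z C \<Longrightarrow> ill G D (Nu x (Out u x P)) z C"
| ibangR: "ill G fmempty P y A \<Longrightarrow> iok G fmempty x (Bang A) \<Longrightarrow>
    ill G fmempty (RepIn x y P) x (Bang A)"
| ibangL: "ill (fmupd u A G) D P z C \<Longrightarrow> u |\<notin>| fmdom G \<Longrightarrow> x |\<notin>| fmdom D \<Longrightarrow>
    x \<notin> bn P \<Longrightarrow> iok G (fmupd x (Bang A) D) z C \<Longrightarrow>
    ill G (fmupd x (Bang A) D) (subst x u P) z C"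
| icutRL: "ill G D P x A \<Longrightarrow> ill G (fmupd x A D') Q z C \<Longrightarrow> x |\<notin>| fmdom D' \<Longrightarrow>
    disj D D' \<Longrightarrow> iok G (D ++\<^sub>f D') z C \<Longrightarrow>
    ill G (D ++\<^sub>f D') (Nu x (Par P Q)) z C"
| icutLR: "ill G (fmupd x A D) P z C \<Longrightarrow> x |\<notin>| fmdom D \<Longrightarrow> ill G D' Q x A \<Longrightarrow>
    disj D D' \<Longrightarrow> iok G (D ++\<^sub>f D') z C \<Longrightarrow>
    ill G (D ++\<^sub>f D') (Nu x (Par P Q)) z C"
| icutBangR: "ill (fmupd u A G) D P z C \<Longrightarrow> u |\<notin>| fmdom G \<Longrightarrow>
    ill G fmempty Q x A \<Longrightarrow> iok G D z C \<Longrightarrow>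
    ill G D (Nu u (Par P (RepIn u x Q))) z C"
| icutBangL: "ill G fmempty P x A \<Longrightarrow> ill (fmupd u A G) D Q z C \<Longrightarrow> u |\<notin>| fmdom G \<Longrightarrow>
    iok G D z C \<Longrightarrow> ill G D (Nu u (Par (RepIn u x P) Q)) z C"
| ialpha: "ill G D P z C \<Longrightarrow> alpha P Q \<Longrightarrow> ill G D Q z C"


definition procsI :: "proc set" where
  "procsI = {P. \<exists>G D x A. ictx G \<and> ictx D \<and> ityp A \<and> ill G D P x A}"

definition procsU :: "proc set" where
  "procsU = {P. \<exists>G D L. ull G D P L}"

end

theory Submission
  imports Defs
begin

text \<open>A piILL judgement provides exactly one channel \<open>z\<close>. In a typable process without
  binders every branch therefore ends in a forwarder \<open>[x <-> z]\<close> or a close \<open>z[].0\<close>: the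
  only rules that could end a branch otherwise bind a name, substitution keeps the provided
  channel since the substituted name is unrestricted, and alpha-renaming is the identity on
  binder-free processes. The binder-free process \<open>0 |> {1: 0().[1 <-> 2], 2: 0().[2 <-> 1]}\<close>
  violates this, yet piULL types it with \<open>0 : (+){1: 1, 2: 1}, 1 : 1, 2 : bot\<close> on the left
  and nothing on the right, closing both branches by the left identity rule. Conversely,
  every piILL derivation is a piULL derivation with a one-element right-hand side.\<close>

lemma disj_fmempty [simp]: "disj D fmempty" "disj fmempty D"
  by (auto simp: disj_def)

lemma ill_imp_ull: "ill G D P z C \<Longrightarrow> ull G D P (sing z C)"
proof (induction rule: ill.induct)
  case (itensorR G D P y A D' Q x B)
  then show ?case
    using ull.tensorR[of G D P y A fmempty D' Q x B fmempty] by (simp add: sing_def iok_def)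
next
  case (ilolliR G y A D P x B)
  then show ?case
    using ull.lolliR[of G y A D P x B fmempty] by (simp add: sing_def iok_def)
next
  case (ilolliL G D P y A x B D' Q z C)
  then show ?case
    using ull.lolliL[of G D P y A fmempty x B D' Q "sing z C"] by (simp add: sing_def iok_def)
next
  case (iplusR As j A G D P x)
  then show ?case
    using ull.plusR[of As j A G D P x fmempty] by (simp add: sing_def iok_def)
next
  case (iwithR Ps As G D x)
  then show ?case
    using ull.withR[of Ps As G D x fmempty] by (simp add: sing_def iok_def)
next
  case (icutRL G D P x A D' Q z C)
  then show ?case
    using ull.cutRL[of G D P x A fmempty D' Q "sing z C"] by (simp add: sing_def iok_def)
next
  case (icutLR G x A D P z C D' Q)
  then show ?case
    using ull.cutLR[of G x A D P "sing z C" D' Q fmempty] by (simp add: sing_def iok_def)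
qed (auto intro: ull.intros simp: iok_def)

primrec binder_free :: "proc \<Rightarrow> bool" where
  "binder_free Nil = True"
| "binder_free (Nu x P) = False"
| "binder_free (Par P Q) = (binder_free P \<and> binder_free Q)"
| "binder_free (Out x y P) = binder_free P"
| "binder_free (In x y P) = False"
| "binder_free (Sel x l P) = binder_free P"
| "binder_free (Case x Ps) = pred_fmap binder_free Ps"
| "binder_free (RepIn x y P) = False"
| "binder_free (Fwd x y) = True"
| "binder_free (Close x P) = binder_free P"
| "binder_free (Wait x P) = binder_free P"

text \<open>Constructs that never occur in a typable binder-free process are left unconstrained.\<close>

primrec terminates_on :: "name \<Rightarrow> proc \<Rightarrow> bool" where
  "terminates_on z Nil = True"
| "terminates_on z (Nu x P) = True"
| "terminates_on z (Par P Q) = True"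
| "terminates_on z (Out x y P) = True"
| "terminates_on z (In x y P) = True"
| "terminates_on z (Sel x l P) = terminates_on z P"
| "terminates_on z (Case x Ps) = pred_fmap (terminates_on z) Ps"
| "terminates_on z (RepIn x y P) = True"
| "terminates_on z (Fwd x y) = (y = z)"
| "terminates_on z (Close x P) = (x = z)"
| "terminates_on z (Wait x P) = terminates_on z P"

lemma alpha_binder_free_eq: "alpha P Q \<Longrightarrow> binder_free P \<or> binder_free Q \<Longrightarrow> P = Q"
proof (induction rule: alpha.induct)
  case (a_Case Ps Qs x)
  have "fmlookup Ps i = fmlookup Qs i" for i
  proof (cases "fmlookup Ps i")
    case None
    then show ?thesis using a_Case(1) by (metis fmdom_notD fmdom_notI)
  next
    case (Some P)
    then obtain Q where Q: "fmlookup Qs i = Some Q" using a_Case(1) by (metis fmdomE fmdomI)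
    have "binder_free P \<or> binder_free Q" using a_Case(3) Some Q by (auto simp: fmran'I)
    then show ?thesis using a_Case(2) Some Q by auto
  qed
  then show ?case by (simp add: fmap_ext)
qed auto

lemma binder_free_subst [simp]: "binder_free (subst x u P) = binder_free P"
  by (induction P) (simp_all, auto simp: fmpred_iff fmran'I)

lemma terminates_on_subst: "u \<noteq> z \<Longrightarrow> terminates_on z P \<Longrightarrow> terminates_on z (subst x u P)"
  by (induction P) (simp_all add: rn_def, auto simp: fmpred_iff fmran'I)

lemma ill_imp_iok: "ill G D P z C \<Longrightarrow> iok G D z C"
  by (induction rule: ill.induct) auto

lemma ill_binder_free_terminates_on: "ill G D P z C \<Longrightarrow> binder_free P \<Longrightarrow> terminates_on z P"
proof (induction rule: ill.induct)
  case (iplusL Ps As G x D z C)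
  then show ?case by (auto simp: fmpred_iff) (metis fmdomE fmdomI)
next
  case (iwithR Ps As G D x)
  then show ?case by (auto simp: fmpred_iff) (metis fmdomE fmdomI)
next
  case (ibangL u A G D P z C x)
  have "u \<noteq> z"
    using ill_imp_iok[OF ibangL(1)] by (auto simp: iok_def ok_def disj_def sing_def)
  then show ?case using ibangL terminates_on_subst by simp
next
  case (ialpha G D P z C Q)
  then show ?case using alpha_binder_free_eq by metis
qed simp_all

definition crossed_forwarders :: proc where
  "crossed_forwarders = Case 0 (fmupd 1 (Wait 0 (Fwd 1 2)) (fmupd 2 (Wait 0 (Fwd 2 1)) fmempty))"

lemma crossed_forwarders_notin_procsI: "crossed_forwarders \<notin> procsI"
proof
  assume "crossed_forwarders \<in> procsI"
  then obtain G D z A where "ill G D crossed_forwarders z A"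
    by (auto simp: procsI_def)
  moreover have "binder_free crossed_forwarders"
    by (simp add: crossed_forwarders_def fmpred_iff)
  ultimately have "terminates_on z crossed_forwarders"
    by (rule ill_binder_free_terminates_on)
  then have "z = 2" and "z = 1"
    by (auto simp: crossed_forwarders_def dest: fmpredD[where x = 1] fmpredD[where x = 2])
  then show False by simp
qed

lemma crossed_forwarders_ull:
  "ull fmempty (fmupd 0 (Plus (fmupd 1 One (fmupd 2 One fmempty))) (fmupd 1 One (sing 2 Bot)))
     crossed_forwarders fmempty"
proof -
  let ?D = "fmupd (1::name) One (sing 2 Bot)"
  have "?D = fmupd 2 Bot (sing 1 One)"
    by (simp add: sing_def fmupd_reorder_neq)
  then have fwd21: "ull fmempty ?D (Fwd 2 1) fmempty"
    using ull.idL[of 2 1 fmempty Bot] by (simp add: ok_def sing_def)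
  have fwd12: "ull fmempty ?D (Fwd 1 2) fmempty"
    using ull.idL[of 1 2 fmempty One] by (simp add: ok_def sing_def)
  have "ull fmempty (fmupd 0 One ?D) (Wait 0 (Fwd 1 2)) fmempty"
    by (rule ull.oneL[OF fwd12]) (auto simp: ok_def sing_def)
  moreover have "ull fmempty (fmupd 0 One ?D) (Wait 0 (Fwd 2 1)) fmempty"
    by (rule ull.oneL[OF fwd21]) (auto simp: ok_def sing_def)
  ultimately show ?thesis
    unfolding crossed_forwarders_def
    by (intro ull.plusL) (auto simp: ok_def disj_def sing_def)
qed

theorem mainTheorem8:
  shows "procsI \<subset> procsU"
proof -
  have "procsI \<subseteq> procsU"
    by (auto simp: procsI_def procsU_def dest: ill_imp_ull)
  moreover have "crossed_forwarders \<in> procsU"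
    using crossed_forwarders_ull by (auto simp: procsU_def)
  ultimately show ?thesis
    using crossed_forwarders_notin_procsI by blast
qed

end
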